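(* Let $L$ be a pentagonal linkage and $X_k=\{P\in\overline{M^C}(L): |A_3A_5|=k\}$ a slice, parameterized on its relative interior by $x_2$, with prime denoting $d/dx_2$. Then on the relative interior of $X_k$ we have $(b_1)'<0$, $(b_3)'<0$ and $(b_5)'>0$; thus $b_1$ and $b_3$ are decreasing and $b_5$ is increasing in $x_2$.
   Context: A pentagonal linkage $L$ is given by side lengths $a_1,\dots,a_5>0$; $M(L)$ is the set of planar 5-gons $(A_1,\dots,A_5)$ with $|A_iA_{i+1}|=a_i$ (indices mod 5) modulo all isometries of $\mathbb{R}^2$; $M^C(L)$ is the set of strictly convex configurations (convex pentagon $A_1\dots A_5$ in this cyclic order, no angle equal to $\pi$) and $\overline{M^C}(L)$ its closure. $b_i=|A_{i-1}A_{i+1}|$, $x_i=b_i^2$ (indices mod 5). *)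

theory Defs
  imports "HOL-Analysis.Analysis"
begin

text \<open>A planar pentagon is given by a map A :: int => complex; only the values
A 1, ..., A 5 matter, and indices are taken modulo 5 (A_0 = A_5, A_6 = A_1, ...).\<close>

definition pt :: "(int \<Rightarrow> complex) \<Rightarrow> int \<Rightarrow> complex" where
  "pt A i = A ((i - 1) mod 5 + 1)"

definition cross :: "complex \<Rightarrow> complex \<Rightarrow> real" where
  "cross u v = Im (cnj u * v)"

definition is_config :: "(int \<Rightarrow> real) \<Rightarrow> (int \<Rightarrow> complex) \<Rightarrow> bool" where
  "is_config a A \<longleftrightarrow> (\<forall>i\<in>{1..5}. dist (pt A i) (pt A (i + 1)) = a i)"

text \<open>Strictly convex pentagon A_1...A_5 in this cyclic order with no angle equal to pi:
for every edge A_i A_{i+1}, all other vertices lie strictly on the same side of its line,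
with a common orientation for all edges.\<close>
definition strictly_convex :: "(int \<Rightarrow> complex) \<Rightarrow> bool" where
  "strictly_convex A \<longleftrightarrow>
     (\<forall>i\<in>{1..5}. \<forall>j\<in>{1..5}. j mod 5 \<noteq> i mod 5 \<and> j mod 5 \<noteq> (i + 1) mod 5 \<longrightarrow>
        cross (pt A (i + 1) - pt A i) (pt A j - pt A i) > 0)
   \<or> (\<forall>i\<in>{1..5}. \<forall>j\<in>{1..5}. j mod 5 \<noteq> i mod 5 \<and> j mod 5 \<noteq> (i + 1) mod 5 \<longrightarrow>
        cross (pt A (i + 1) - pt A i) (pt A j - pt A i) < 0)"

definition bd :: "(int \<Rightarrow> complex) \<Rightarrow> int \<Rightarrow> real" where
  "bd A i = dist (pt A (i - 1)) (pt A (i + 1))"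

definition xd :: "(int \<Rightarrow> complex) \<Rightarrow> int \<Rightarrow> real" where
  "xd A i = (bd A i)^2"

end

theory Submission
  imports Defs
begin

text \<open>Fix the diagonal A3A5 of length k. In the slice, |A1A3| = sqrt x2, so the
triangles A5A3A1 and A1A3A2 have all sides known, and the law of cosines gives
their angles at A3 as functions of x2. Since the sides a5 and a1 opposite A3 are
fixed while |A1A3| grows, the angle phi = angle A5A3A2 they add up to decreases;
the sign of its derivative reduces to the convexity of the pentagon at A1.
Now b1 and b3 are the third sides of triangles at A3 with fixed sides and included
angle phi resp. phi + angle A4A3A5, while b5 is the third side of a triangle at A5
with included angle angle A1A5A3 + angle A3A5A4, and angle A1A5A3 increases because
its opposite side sqrt x2 does. The third side of a triangle increases with the
included angle in (0, pi), which gives the three signs.\<close>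

section \<open>Planar vectors and angles\<close>

lemma cross_eq: "cross u v = Re u * Im v - Im u * Re v"
  by (simp add: cross_def)

lemma cross_commute: "cross v u = - cross u v"
  by (simp add: cross_eq)

lemma cross_cnj: "cross (cnj u) (cnj v) = - cross u v"
  by (simp add: cross_eq)

lemma cross_nonzero_imp_nonzero: "cross u v \<noteq> 0 \<Longrightarrow> u \<noteq> 0 \<and> v \<noteq> 0"
  by (auto simp: cross_eq)

lemma inner_square_add_cross_square: "(u \<bullet> v)\<^sup>2 + (cross u v)\<^sup>2 = (norm u)\<^sup>2 * (norm v)\<^sup>2"
  unfolding cmod_power2 cross_eq inner_complex_def by (simp add: power2_eq_square algebra_simps)

lemma norm_square_mult_inner: "(norm v)\<^sup>2 * (u \<bullet> w) = (u \<bullet> v) * (v \<bullet> w) - cross u v * cross v w"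
  unfolding cmod_power2 cross_eq inner_complex_def by (simp add: power2_eq_square algebra_simps)

lemma norm_square_mult_cross: "(norm v)\<^sup>2 * cross u w = cross u v * (v \<bullet> w) + (u \<bullet> v) * cross v w"
  unfolding cmod_power2 cross_eq inner_complex_def by (simp add: power2_eq_square algebra_simps)

lemma inner_cross_convex_vertex:
  "p \<bullet> (p - m) * cross p q + p \<bullet> (p - q) * cross m p = (norm p)\<^sup>2 * cross (q - p) (m - p)"
  unfolding cmod_power2 cross_eq inner_complex_def by (simp add: power2_eq_square algebra_simps)

lemma convex_vertex_rate:
  assumes "0 < cross m p" "0 < cross p q" "0 < cross (q - p) (m - p)"
  shows "0 < p \<bullet> (p - m) / cross m p + p \<bullet> (p - q) / cross p q"
proof -
  have "p \<noteq> 0"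
    using assms(1) cross_nonzero_imp_nonzero[of m p] by auto
  have "p \<bullet> (p - m) / cross m p + p \<bullet> (p - q) / cross p q
      = (norm p)\<^sup>2 * cross (q - p) (m - p) / (cross m p * cross p q)"
    using assms(1,2) by (simp add: field_simps flip: inner_cross_convex_vertex)
  also have "0 < \<dots>"
    using assms \<open>p \<noteq> 0\<close> by simp
  finally show ?thesis .
qed

definition vangle :: "complex \<Rightarrow> complex \<Rightarrow> real" where
  "vangle u v = arccos (u \<bullet> v / (norm u * norm v))"

lemma abs_inner_div_norms_le_1: "\<bar>u \<bullet> v / (norm u * norm v)\<bar> \<le> 1"
proof (cases "u = 0 \<or> v = 0")
  case False
  then have "\<bar>u \<bullet> v\<bar> \<le> 1 * (norm u * norm v)"
    using Cauchy_Schwarz_ineq2[of u v] by simp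
  with False show ?thesis
    by (simp add: abs_divide pos_divide_le_eq)
qed auto

lemma cos_vangle: "cos (vangle u v) = u \<bullet> v / (norm u * norm v)"
  unfolding vangle_def by (rule cos_arccos_abs[OF abs_inner_div_norms_le_1])

lemma vangle_bounds: "0 \<le> vangle u v" "vangle u v \<le> pi"
  using abs_inner_div_norms_le_1[of u v] unfolding vangle_def abs_le_iff
  by (simp_all add: arccos_lbound arccos_ubound)

lemma vangle_commute: "vangle u v = vangle v u"
  by (simp add: vangle_def inner_commute mult.commute)

lemma sin_vangle:
  assumes "u \<noteq> 0" "v \<noteq> 0"
  shows "sin (vangle u v) = \<bar>cross u v\<bar> / (norm u * norm v)"
proof -
  have "1 - (u \<bullet> v / (norm u * norm v))\<^sup>2 = (\<bar>cross u v\<bar> / (norm u * norm v))\<^sup>2"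
    using inner_square_add_cross_square[of u v] assms
    by (simp add: field_simps power_mult_distrib)
  then show ?thesis
    unfolding vangle_def sin_arccos_abs[OF abs_inner_div_norms_le_1] by simp
qed

lemma sin_vangle_pos: "cross u v \<noteq> 0 \<Longrightarrow> 0 < sin (vangle u v)"
  using cross_nonzero_imp_nonzero[of u v] by (simp add: sin_vangle)

lemma vangle_add:
  assumes "0 < cross u v" "0 < cross v w" "0 < cross u w"
  shows "vangle u w = vangle u v + vangle v w"
proof -
  have nz: "u \<noteq> 0" "v \<noteq> 0" "w \<noteq> 0"
    using assms cross_nonzero_imp_nonzero by (metis less_irrefl)+
  let ?x = "vangle u v + vangle v w"
  have "cos ?x = (u \<bullet> v * (v \<bullet> w) - cross u v * cross v w) / (norm u * (norm v)\<^sup>2 * norm w)"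
    using nz assms by (simp add: cos_add cos_vangle sin_vangle field_simps power2_eq_square)
  also have "\<dots> = u \<bullet> w / (norm u * norm w)"
    using nz by (simp flip: norm_square_mult_inner)
  finally have cos_x: "cos ?x = u \<bullet> w / (norm u * norm w)" .
  have "0 < sin ?x"
  proof -
    have "sin ?x = (cross u v * (v \<bullet> w) + u \<bullet> v * cross v w) / (norm u * (norm v)\<^sup>2 * norm w)"
      using nz assms by (simp add: sin_add cos_vangle sin_vangle field_simps power2_eq_square)
    also have "\<dots> = cross u w / (norm u * norm w)"
      using nz by (simp flip: norm_square_mult_cross)
    finally show ?thesis
      using assms nz by simp
  qed
  have "?x \<le> pi"
  proof (rule ccontr)
    assume "\<not> ?x \<le> pi"
    then have "0 \<le> sin (?x - pi)"
      using vangle_bounds[of u v] vangle_bounds[of v w] by (intro sin_ge_zero) auto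
    with \<open>0 < sin ?x\<close> show False
      by (simp add: sin_diff)
  qed
  have "vangle u w = arccos (cos ?x)"
    by (simp only: cos_x vangle_def[of u w])
  also have "\<dots> = ?x"
    using vangle_bounds[of u v] vangle_bounds[of v w] \<open>?x \<le> pi\<close> by (intro arccos_cos) auto
  finally show ?thesis .
qed

section \<open>Triangles with given sides\<close>

text \<open>Law of cosines: tri_angle x y z is the angle between the sides of lengths x and y
of a triangle whose third side has length z, and third_side recovers z from x, y and
that angle.\<close>

definition tri_cos :: "real \<Rightarrow> real \<Rightarrow> real \<Rightarrow> real" where
  "tri_cos x y z = (x\<^sup>2 + y\<^sup>2 - z\<^sup>2) / (2 * x * y)"

definition tri_angle :: "real \<Rightarrow> real \<Rightarrow> real \<Rightarrow> real" where
  "tri_angle x y z = arccos (tri_cos x y z)"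

definition third_side :: "real \<Rightarrow> real \<Rightarrow> real \<Rightarrow> real" where
  "third_side x y \<theta> = sqrt (x\<^sup>2 + y\<^sup>2 - 2 * x * y * cos \<theta>)"

lemma tri_cos_norms: "tri_cos (norm u) (norm v) (norm (u - v)) = u \<bullet> v / (norm u * norm v)"
  unfolding tri_cos_def dot_norm_neg[of u v] by (simp add: mult.assoc)

lemma vangle_eq_tri_angle: "vangle u v = tri_angle (norm u) (norm v) (norm (u - v))"
  by (simp add: vangle_def tri_angle_def tri_cos_norms)

lemma abs_tri_cos_norms_less_1:
  assumes "cross u v \<noteq> 0"
  shows "\<bar>tri_cos (norm u) (norm v) (norm (u - v))\<bar> < 1"
proof -
  have "0 < (cross u v)\<^sup>2"
    using assms by simp
  then have "(u \<bullet> v)\<^sup>2 < (norm u * norm v)\<^sup>2"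
    using inner_square_add_cross_square[of u v] unfolding power_mult_distrib by linarith
  then have "\<bar>u \<bullet> v\<bar> < norm u * norm v"
    using power2_less_imp_less[of "\<bar>u \<bullet> v\<bar>" "norm u * norm v"] by simp
  then show ?thesis
    using cross_nonzero_imp_nonzero[OF assms] by (simp add: tri_cos_norms abs_divide)
qed

lemma norm_diff_eq_third_side: "norm (u - v) = third_side (norm u) (norm v) (vangle u v)"
proof -
  have "norm u * norm v * cos (vangle u v) = u \<bullet> v"
    by (cases "u = 0 \<or> v = 0") (auto simp: cos_vangle)
  then have "(norm u)\<^sup>2 + (norm v)\<^sup>2 - 2 * norm u * norm v * cos (vangle u v) = (norm (u - v))\<^sup>2"
    by (simp add: dot_norm_neg mult.assoc)
  then show ?thesis
    by (simp add: third_side_def)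
qed

lemma arccos_has_derivative:
  assumes "(c has_real_derivative c') (at t)" "\<bar>c t\<bar> < 1"
  shows "((\<lambda>s. arccos (c s)) has_real_derivative - c' / sin (arccos (c t))) (at t)"
proof -
  have "((\<lambda>s. arccos (c s)) has_real_derivative inverse (- sqrt (1 - (c t)\<^sup>2)) * c') (at t)"
    using assms by (intro DERIV_chain2[OF DERIV_arccos]) auto
  then show ?thesis
    using assms(2) by (simp add: sin_arccos_abs divide_inverse mult.commute)
qed

lemma tri_angle_sqrt_has_derivative:
  assumes "0 < y" "0 < t" "\<bar>tri_cos (sqrt t) y z\<bar> < 1"
  shows "((\<lambda>s. tri_angle (sqrt s) y z) has_real_derivative
           (y\<^sup>2 - z\<^sup>2 - t) / (4 * y * t * sqrt t * sin (tri_angle (sqrt t) y z))) (at t)"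
proof -
  have "((\<lambda>s. (s + y\<^sup>2 - z\<^sup>2) / (2 * sqrt s * y)) has_real_derivative (t - y\<^sup>2 + z\<^sup>2) / (4 * y * t * sqrt t)) (at t)"
  proof -
    have st: "sqrt t * sqrt t = t" "\<And>r. sqrt t * (sqrt t * r) = t * r"
      using assms(2) by (simp_all flip: mult.assoc)
    show ?thesis
      using assms by (auto intro!: derivative_eq_intros simp: field_simps power2_eq_square st)
  qed
  then have dc: "((\<lambda>s. tri_cos (sqrt s) y z) has_real_derivative (t - y\<^sup>2 + z\<^sup>2) / (4 * y * t * sqrt t)) (at t)"
    by (rule has_field_derivative_transform_within_open[where S = "{0<..}"]) (use assms in \<open>auto simp: tri_cos_def\<close>)
  have "- ((t - y\<^sup>2 + z\<^sup>2) / (4 * y * t * sqrt t) / sin (tri_angle (sqrt t) y z)) =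
    (y\<^sup>2 - z\<^sup>2 - t) / (4 * y * t * sqrt t * sin (tri_angle (sqrt t) y z))"
    by (simp add: minus_divide_left algebra_simps)
  with arccos_has_derivative[OF dc assms(3)] show ?thesis
    by (simp add: tri_angle_def)
qed

lemma tri_angle_sqrt_opposite_has_derivative:
  assumes "0 < x" "0 < y" "0 < t" "\<bar>tri_cos x y (sqrt t)\<bar> < 1"
  shows "((\<lambda>s. tri_angle x y (sqrt s)) has_real_derivative 1 / (2 * x * y * sin (tri_angle x y (sqrt t)))) (at t)"
proof -
  have "((\<lambda>s. (x\<^sup>2 + y\<^sup>2 - s) / (2 * x * y)) has_real_derivative - 1 / (2 * x * y)) (at t)"
    using assms by (auto intro!: derivative_eq_intros)
  then have "((\<lambda>s. tri_cos x y (sqrt s)) has_real_derivative - 1 / (2 * x * y)) (at t)"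
    by (rule has_field_derivative_transform_within_open[where S = "{0<..}"]) (use assms in \<open>auto simp: tri_cos_def\<close>)
  from arccos_has_derivative[OF this assms(4)] show ?thesis
    by (simp add: tri_angle_def)
qed

lemma third_side_has_derivative:
  assumes "0 < x" "0 < y" "(\<theta> has_real_derivative \<theta>') (at t)" "0 < sin (\<theta> t)"
  shows "\<exists>D. ((\<lambda>s. third_side x y (\<theta> s)) has_real_derivative D) (at t) \<and> sgn D = sgn \<theta>'"
proof -
  define R where "R = x\<^sup>2 + y\<^sup>2 - 2 * x * y * cos (\<theta> t)"
  have "cos (\<theta> t) \<noteq> 1"
    using assms(4) sin_squared_eq[of "\<theta> t"] by auto
  then have "cos (\<theta> t) < 1"
    using cos_le_one[of "\<theta> t"] by linarith
  then have "0 < 2 * x * y * (1 - cos (\<theta> t))"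
    using assms(1,2) by simp
  moreover have "R = (x - y)\<^sup>2 + 2 * x * y * (1 - cos (\<theta> t))"
    by (simp add: R_def power2_diff algebra_simps)
  ultimately have R: "0 < R"
    by (metis add_nonneg_pos zero_le_power2)
  have "((\<lambda>s. x\<^sup>2 + y\<^sup>2 - 2 * x * y * cos (\<theta> s)) has_real_derivative 2 * x * y * sin (\<theta> t) * \<theta>') (at t)"
    using assms(3) by (auto intro!: derivative_eq_intros)
  from DERIV_chain2[OF DERIV_real_sqrt[OF R[unfolded R_def]] this, folded R_def]
  have "((\<lambda>s. third_side x y (\<theta> s)) has_real_derivative x * y * sin (\<theta> t) / sqrt R * \<theta>') (at t)"
    unfolding third_side_def by (rule DERIV_cong) (simp add: field_simps)
  moreover have "0 < x * y * sin (\<theta> t) / sqrt R"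
    using assms R by simp
  ultimately show ?thesis
    by (metis sgn_mult sgn_pos mult.left_neutral)
qed

section \<open>Pentagons in a slice\<close>

text \<open>For a configuration in the slice with x2 = s, so that |A1A3| = sqrt s:
slice_angle_3 a k s is the angle A5A3A2 = A5A3A1 + A1A3A2, and slice_angle_5 a k s
is the angle A1A5A3.\<close>

definition slice_angle_3 :: "(int \<Rightarrow> real) \<Rightarrow> real \<Rightarrow> real \<Rightarrow> real" where
  "slice_angle_3 a k s = tri_angle (sqrt s) k (a 5) + tri_angle (sqrt s) (a 2) (a 1)"

definition slice_angle_5 :: "(int \<Rightarrow> real) \<Rightarrow> real \<Rightarrow> real \<Rightarrow> real" where
  "slice_angle_5 a k s = tri_angle (a 5) k (sqrt s)"

lemma slice_angle_3_has_derivative: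
  assumes "0 < k" "0 < a 2" "0 < t"
    and "\<bar>tri_cos (sqrt t) k (a 5)\<bar> < 1" "\<bar>tri_cos (sqrt t) (a 2) (a 1)\<bar> < 1"
  shows "(slice_angle_3 a k has_real_derivative
           ((k\<^sup>2 - (a 5)\<^sup>2 - t) / (k * sin (tri_angle (sqrt t) k (a 5)))
            + ((a 2)\<^sup>2 - (a 1)\<^sup>2 - t) / (a 2 * sin (tri_angle (sqrt t) (a 2) (a 1)))) / (4 * t * sqrt t)) (at t)"
  unfolding slice_angle_3_def[abs_def]
  by (rule DERIV_cong[OF DERIV_add[OF tri_angle_sqrt_has_derivative tri_angle_sqrt_has_derivative]])
    (use assms in \<open>simp_all add: add_divide_distrib mult_ac\<close>)

definition convex_ccw :: "(int \<Rightarrow> complex) \<Rightarrow> bool" where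
  "convex_ccw A \<longleftrightarrow>
     (\<forall>i\<in>{1..5}. \<forall>j\<in>{1..5}. j mod 5 \<noteq> i mod 5 \<and> j mod 5 \<noteq> (i + 1) mod 5 \<longrightarrow>
        0 < cross (pt A (i + 1) - pt A i) (pt A j - pt A i))"

lemma pt_cnj: "pt (cnj \<circ> A) i = cnj (pt A i)"
  by (simp add: pt_def)

lemma strictly_convex_imp_ccw_or_reflection:
  assumes "strictly_convex A"
  shows "convex_ccw A \<or> convex_ccw (cnj \<circ> A)"
  using assms unfolding strictly_convex_def convex_ccw_def pt_cnj
  by (simp flip: complex_cnj_diff add: cross_cnj)

lemma slice_ccw_representative:
  assumes "is_config a A" "strictly_convex A" "dist (pt A 3) (pt A 5) = k" "xd A 2 = s"
  obtains B where "convex_ccw B" "is_config a B" "dist (pt B 3) (pt B 5) = k" "xd B 2 = s"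
    "\<And>i. bd B i = bd A i"
proof -
  have "dist (pt (cnj \<circ> A) i) (pt (cnj \<circ> A) j) = dist (pt A i) (pt A j)" for i j
    by (simp add: pt_cnj dist_norm flip: complex_cnj_diff)
  then have "is_config a (cnj \<circ> A)" "dist (pt (cnj \<circ> A) 3) (pt (cnj \<circ> A) 5) = k"
    "xd (cnj \<circ> A) 2 = s" "\<And>i. bd (cnj \<circ> A) i = bd A i"
    using assms by (simp_all add: is_config_def xd_def bd_def)
  with assms that strictly_convex_imp_ccw_or_reflection[OF assms(2)] show ?thesis
    by blast
qed

lemma pt_simps: "pt A 0 = A 5" "pt A 1 = A 1" "pt A 2 = A 2" "pt A 3 = A 3" "pt A 4 = A 4"
  "pt A 5 = A 5" "pt A 6 = A 1"
  by (simp_all add: pt_def)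

lemma convex_ccw_crosses:
  assumes "convex_ccw A"
  shows "0 < cross (A 5 - A 3) (A 1 - A 3)" "0 < cross (A 1 - A 3) (A 2 - A 3)"
    "0 < cross (A 5 - A 3) (A 2 - A 3)" "0 < cross (A 4 - A 3) (A 5 - A 3)"
    "0 < cross (A 4 - A 3) (A 2 - A 3)" "0 < cross (A 1 - A 5) (A 3 - A 5)"
    "0 < cross (A 3 - A 5) (A 4 - A 5)" "0 < cross (A 1 - A 5) (A 4 - A 5)"
    "0 < cross (A 2 - A 1) (A 5 - A 1)"
  using assms[unfolded convex_ccw_def, rule_format, of 5 3] assms[unfolded convex_ccw_def, rule_format, of 1 3]
    assms[unfolded convex_ccw_def, rule_format, of 2 5] assms[unfolded convex_ccw_def, rule_format, of 3 5]
    assms[unfolded convex_ccw_def, rule_format, of 2 4] assms[unfolded convex_ccw_def, rule_format, of 4 1]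
    assms[unfolded convex_ccw_def, rule_format, of 1 5]
  by (simp_all add: pt_simps cross_eq algebra_simps)

lemma is_config_sides:
  assumes "is_config a A"
  shows "norm (A 1 - A 2) = a 1" "norm (A 2 - A 3) = a 2" "norm (A 4 - A 3) = a 3"
    "norm (A 4 - A 5) = a 4" "norm (A 1 - A 5) = a 5"
  using assms[unfolded is_config_def, rule_format, of 1] assms[unfolded is_config_def, rule_format, of 2]
    assms[unfolded is_config_def, rule_format, of 3] assms[unfolded is_config_def, rule_format, of 4]
    assms[unfolded is_config_def, rule_format, of 5]
  by (simp_all add: pt_simps dist_norm norm_minus_commute)

lemma slice_norms:
  assumes "dist (pt A 3) (pt A 5) = k" "xd A 2 = s"
  shows "norm (A 5 - A 3) = k" "norm (A 3 - A 5) = k" "norm (A 1 - A 3) = sqrt s"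
  using assms by (auto simp: pt_simps dist_norm norm_minus_commute xd_def bd_def)

lemma ccw_slice_pos:
  assumes "convex_ccw A" "dist (pt A 3) (pt A 5) = k" "xd A 2 = s"
  shows "0 < k" "0 < s"
proof -
  have "A 5 - A 3 \<noteq> 0" "A 1 - A 3 \<noteq> 0"
    using cross_nonzero_imp_nonzero convex_ccw_crosses(1)[OF assms(1)] by (metis less_irrefl)+
  then have "0 < norm (A 5 - A 3)" "0 < sqrt s"
    unfolding slice_norms(3)[OF assms(2,3), symmetric] by simp_all
  then show "0 < k" "0 < s"
    by (simp_all add: slice_norms(1)[OF assms(2,3)])
qed

lemma ccw_slice_diagonals:
  assumes "convex_ccw A" "is_config a A" "dist (pt A 3) (pt A 5) = k" "xd A 2 = s"
  shows "bd A 1 = third_side k (a 2) (slice_angle_3 a k s)"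
    and "bd A 3 = third_side (a 3) (a 2) (tri_angle (a 3) k (a 4) + slice_angle_3 a k s)"
    and "bd A 5 = third_side (a 5) (a 4) (slice_angle_5 a k s + tri_angle k (a 4) (a 3))"
    and "0 < sin (slice_angle_3 a k s)"
    and "0 < sin (tri_angle (a 3) k (a 4) + slice_angle_3 a k s)"
    and "0 < sin (slice_angle_5 a k s + tri_angle k (a 4) (a 3))"
proof -
  note cross = convex_ccw_crosses[OF assms(1)] and side = is_config_sides[OF assms(2)]
  note k = slice_norms(1,2)[OF assms(3,4)] and s = slice_norms(3)[OF assms(3,4)]
  have angle_3: "slice_angle_3 a k s = vangle (A 5 - A 3) (A 2 - A 3)"
    using vangle_eq_tri_angle[of "A 1 - A 3" "A 5 - A 3"] vangle_eq_tri_angle[of "A 1 - A 3" "A 2 - A 3"]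
      vangle_add[OF cross(1-3)] vangle_commute[of "A 5 - A 3"] k s side
    by (simp add: slice_angle_3_def)
  have angle_3': "tri_angle (a 3) k (a 4) + slice_angle_3 a k s = vangle (A 4 - A 3) (A 2 - A 3)"
    using vangle_eq_tri_angle[of "A 4 - A 3" "A 5 - A 3"] vangle_add[OF cross(4,3,5)] angle_3 k side
    by simp
  have angle_5: "slice_angle_5 a k s + tri_angle k (a 4) (a 3) = vangle (A 1 - A 5) (A 4 - A 5)"
    using vangle_eq_tri_angle[of "A 1 - A 5" "A 3 - A 5"] vangle_eq_tri_angle[of "A 3 - A 5" "A 4 - A 5"]
      vangle_add[OF cross(6-8)] k s side
    by (simp add: slice_angle_5_def norm_minus_commute)
  show "bd A 1 = third_side k (a 2) (slice_angle_3 a k s)"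
    using norm_diff_eq_third_side[of "A 5 - A 3" "A 2 - A 3"] angle_3 k side
    by (simp add: bd_def pt_simps dist_norm)
  show "bd A 3 = third_side (a 3) (a 2) (tri_angle (a 3) k (a 4) + slice_angle_3 a k s)"
    using norm_diff_eq_third_side[of "A 4 - A 3" "A 2 - A 3"] angle_3' side
    by (simp add: bd_def pt_simps dist_norm norm_minus_commute)
  show "bd A 5 = third_side (a 5) (a 4) (slice_angle_5 a k s + tri_angle k (a 4) (a 3))"
    using norm_diff_eq_third_side[of "A 1 - A 5" "A 4 - A 5"] angle_5 side
    by (simp add: bd_def pt_simps dist_norm norm_minus_commute)
  show "0 < sin (slice_angle_3 a k s)"
    using angle_3 sin_vangle_pos cross(3) by (metis less_irrefl)
  show "0 < sin (tri_angle (a 3) k (a 4) + slice_angle_3 a k s)"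
    using angle_3' sin_vangle_pos cross(5) by (metis less_irrefl)
  show "0 < sin (slice_angle_5 a k s + tri_angle k (a 4) (a 3))"
    using angle_5 sin_vangle_pos cross(8) by (metis less_irrefl)
qed

lemma ccw_slice_angle_3_decreasing:
  assumes "convex_ccw A" "is_config a A" "dist (pt A 3) (pt A 5) = k" "xd A 2 = s"
  shows "\<exists>D. (slice_angle_3 a k has_real_derivative D) (at s) \<and> D < 0"
proof -
  define m p q where "m = A 5 - A 3" and "p = A 1 - A 3" and "q = A 2 - A 3"
  have cross: "0 < cross m p" "0 < cross p q" "0 < cross (q - p) (m - p)"
    using convex_ccw_crosses(1,2,9)[OF assms(1)] by (simp_all add: m_def p_def q_def)
  have norms: "norm m = k" "norm p = sqrt s" "norm q = a 2" "norm (p - m) = a 5" "norm (p - q) = a 1"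
    using slice_norms[OF assms(3,4)] is_config_sides[OF assms(2)] by (simp_all add: m_def p_def q_def)
  have "m \<noteq> 0" "p \<noteq> 0" "q \<noteq> 0"
    using cross(1,2) cross_nonzero_imp_nonzero[of m p] cross_nonzero_imp_nonzero[of p q] by auto
  then have pos: "0 < k" "0 < s" "0 < a 2"
    using ccw_slice_pos[OF assms(1,3,4)] by (auto simp flip: norms(3))
  have angles: "tri_angle (sqrt s) k (a 5) = vangle p m" "tri_angle (sqrt s) (a 2) (a 1) = vangle p q"
    by (simp_all add: vangle_eq_tri_angle norms)
  have "\<bar>tri_cos (sqrt s) k (a 5)\<bar> < 1" "\<bar>tri_cos (sqrt s) (a 2) (a 1)\<bar> < 1"
    using abs_tri_cos_norms_less_1[of p m] abs_tri_cos_norms_less_1[of p q] cross(1,2)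
    by (auto simp: norms cross_commute[of p m])
  note deriv = slice_angle_3_has_derivative[OF pos(1,3,2) this]
  have sin: "k * sin (tri_angle (sqrt s) k (a 5)) = cross m p / norm p"
    "a 2 * sin (tri_angle (sqrt s) (a 2) (a 1)) = cross p q / norm p"
    using cross(1,2) pos \<open>m \<noteq> 0\<close> \<open>p \<noteq> 0\<close> \<open>q \<noteq> 0\<close>
    by (auto simp: angles sin_vangle norms cross_commute[of p m])
  have numerators: "k\<^sup>2 - (a 5)\<^sup>2 - s = - 2 * (p \<bullet> (p - m))"
    "(a 2)\<^sup>2 - (a 1)\<^sup>2 - s = - 2 * (p \<bullet> (p - q))"
    using pos(2) by (auto simp: inner_diff_right dot_norm_neg[of p] power2_norm_eq_inner[symmetric] norms)
  have "(k\<^sup>2 - (a 5)\<^sup>2 - s) / (k * sin (tri_angle (sqrt s) k (a 5)))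
      + ((a 2)\<^sup>2 - (a 1)\<^sup>2 - s) / (a 2 * sin (tri_angle (sqrt s) (a 2) (a 1)))
    = - 2 * norm p * (p \<bullet> (p - m) / cross m p + p \<bullet> (p - q) / cross p q)"
    unfolding sin numerators using cross(1,2) \<open>p \<noteq> 0\<close> by (simp add: field_simps)
  also have "\<dots> < 0"
    using convex_vertex_rate[OF cross] \<open>p \<noteq> 0\<close> by (simp add: mult_pos_pos)
  finally show ?thesis
    using deriv pos(2) by (auto simp: divide_neg_pos)
qed

lemma ccw_slice_angle_5_increasing:
  assumes "convex_ccw A" "is_config a A" "dist (pt A 3) (pt A 5) = k" "xd A 2 = s"
  shows "\<exists>D. (slice_angle_5 a k has_real_derivative D) (at s) \<and> 0 < D"
proof -
  define p m where "p = A 1 - A 5" and "m = A 3 - A 5"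
  have cross: "0 < cross p m"
    using convex_ccw_crosses(6)[OF assms(1)] by (simp add: p_def m_def)
  have norms: "norm p = a 5" "norm m = k" "norm (p - m) = sqrt s"
    using slice_norms[OF assms(3,4)] is_config_sides[OF assms(2)] by (simp_all add: p_def m_def)
  have "p \<noteq> 0"
    using cross cross_nonzero_imp_nonzero[of p m] by auto
  then have pos: "0 < a 5" "0 < k" "0 < s"
    using ccw_slice_pos[OF assms(1,3,4)] by (auto simp flip: norms(1))
  have angle: "tri_angle (a 5) k (sqrt s) = vangle p m"
    by (simp add: vangle_eq_tri_angle norms)
  have "\<bar>tri_cos (a 5) k (sqrt s)\<bar> < 1"
    using abs_tri_cos_norms_less_1[of p m] cross by (simp add: norms)
  from tri_angle_sqrt_opposite_has_derivative[OF pos this]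
  have "(slice_angle_5 a k has_real_derivative 1 / (2 * a 5 * k * sin (vangle p m))) (at s)"
    by (simp add: slice_angle_5_def[abs_def] angle)
  moreover have "0 < 1 / (2 * a 5 * k * sin (vangle p m))"
    using pos sin_vangle_pos[of p m] cross by simp
  ultimately show ?thesis
    by blast
qed

lemma ccw_slice_diagonals_derivatives:
  assumes "convex_ccw A" "is_config a A" "dist (pt A 3) (pt A 5) = k" "xd A 2 = t"
    and "\<forall>i\<in>{1..5}. 0 < a i"
  shows "\<exists>D. ((\<lambda>s. third_side k (a 2) (slice_angle_3 a k s)) has_real_derivative D) (at t) \<and> D < 0"
    and "\<exists>D. ((\<lambda>s. third_side (a 3) (a 2) (tri_angle (a 3) k (a 4) + slice_angle_3 a k s))
           has_real_derivative D) (at t) \<and> D < 0"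
    and "\<exists>D. ((\<lambda>s. third_side (a 5) (a 4) (slice_angle_5 a k s + tri_angle k (a 4) (a 3)))
           has_real_derivative D) (at t) \<and> 0 < D"
proof -
  have pos: "0 < k" "0 < a 2" "0 < a 3" "0 < a 4" "0 < a 5"
    using ccw_slice_pos(1)[OF assms(1,3,4)] assms(5) by auto
  note sin = ccw_slice_diagonals(4-6)[OF assms(1-4)]
  obtain D3 D5 where D3: "(slice_angle_3 a k has_real_derivative D3) (at t)" "D3 < 0"
    and D5: "(slice_angle_5 a k has_real_derivative D5) (at t)" "0 < D5"
    using ccw_slice_angle_3_decreasing[OF assms(1-4)] ccw_slice_angle_5_increasing[OF assms(1-4)] by blast
  have D3': "((\<lambda>s. tri_angle (a 3) k (a 4) + slice_angle_3 a k s) has_real_derivative D3) (at t)"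
    and D5': "((\<lambda>s. slice_angle_5 a k s + tri_angle k (a 4) (a 3)) has_real_derivative D5) (at t)"
    using D3(1) D5(1) by (auto intro!: derivative_eq_intros)
  from third_side_has_derivative[OF pos(1,2) D3(1) sin(1)] third_side_has_derivative[OF pos(3,2) D3' sin(2)]
    third_side_has_derivative[OF pos(5,4) D5' sin(3)] D3(2) D5(2)
  show "\<exists>D. ((\<lambda>s. third_side k (a 2) (slice_angle_3 a k s)) has_real_derivative D) (at t) \<and> D < 0"
    and "\<exists>D. ((\<lambda>s. third_side (a 3) (a 2) (tri_angle (a 3) k (a 4) + slice_angle_3 a k s))
           has_real_derivative D) (at t) \<and> D < 0"
    and "\<exists>D. ((\<lambda>s. third_side (a 5) (a 4) (slice_angle_5 a k s + tri_angle k (a 4) (a 3)))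
           has_real_derivative D) (at t) \<and> 0 < D"
    by (auto simp: sgn_if split: if_splits)
qed

lemma slice_diagonals:
  assumes "is_config a A" "strictly_convex A" "dist (pt A 3) (pt A 5) = k" "xd A 2 = s"
  shows "bd A 1 = third_side k (a 2) (slice_angle_3 a k s)"
    and "bd A 3 = third_side (a 3) (a 2) (tri_angle (a 3) k (a 4) + slice_angle_3 a k s)"
    and "bd A 5 = third_side (a 5) (a 4) (slice_angle_5 a k s + tri_angle k (a 4) (a 3))"
proof -
  from assms obtain B where B: "convex_ccw B" "is_config a B" "dist (pt B 3) (pt B 5) = k"
    "xd B 2 = s" "\<And>i. bd B i = bd A i"
    by (rule slice_ccw_representative) blast
  then show "bd A 1 = third_side k (a 2) (slice_angle_3 a k s)"
    and "bd A 3 = third_side (a 3) (a 2) (tri_angle (a 3) k (a 4) + slice_angle_3 a k s)"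
    and "bd A 5 = third_side (a 5) (a 4) (slice_angle_5 a k s + tri_angle k (a 4) (a 3))"
    using ccw_slice_diagonals(1-3)[OF B(1-4)] by simp_all
qed

theorem lemma5:
  fixes a :: "int \<Rightarrow> real" and k :: real
    and \<gamma> :: "real \<Rightarrow> int \<Rightarrow> complex" and S :: "real set" and t :: real
  assumes "\<forall>i\<in>{1..5}. a i > 0"
    and "open S"
    and "\<forall>s\<in>S. is_config a (\<gamma> s) \<and> strictly_convex (\<gamma> s) \<and>
                 dist (pt (\<gamma> s) 3) (pt (\<gamma> s) 5) = k \<and> xd (\<gamma> s) 2 = s"
    and "t \<in> S"
  shows "(\<exists>D. ((\<lambda>s. bd (\<gamma> s) 1) has_real_derivative D) (at t) \<and> D < 0)
       \<and> (\<exists>D. ((\<lambda>s. bd (\<gamma> s) 3) has_real_derivative D) (at t) \<and> D < 0)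
       \<and> (\<exists>D. ((\<lambda>s. bd (\<gamma> s) 5) has_real_derivative D) (at t) \<and> D > 0)"
proof -
  have slice: "is_config a (\<gamma> s)" "strictly_convex (\<gamma> s)" "dist (pt (\<gamma> s) 3) (pt (\<gamma> s) 5) = k"
    "xd (\<gamma> s) 2 = s" if "s \<in> S" for s
    using assms(3) that by auto
  have transfer: "((\<lambda>s. bd (\<gamma> s) i) has_real_derivative D) (at t)"
    if "(F has_real_derivative D) (at t)" "\<And>s. s \<in> S \<Longrightarrow> bd (\<gamma> s) i = F s" for i F D
    by (rule has_field_derivative_transform_within_open[OF that(1) assms(2,4)]) (simp add: that(2))
  from slice[OF assms(4)] obtain B where "convex_ccw B" "is_config a B" "dist (pt B 3) (pt B 5) = k"
    "xd B 2 = t"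
    by (rule slice_ccw_representative)
  from ccw_slice_diagonals_derivatives[OF this assms(1)] obtain D1 D3 D5
    where "((\<lambda>s. third_side k (a 2) (slice_angle_3 a k s)) has_real_derivative D1) (at t)" "D1 < 0"
      and "((\<lambda>s. third_side (a 3) (a 2) (tri_angle (a 3) k (a 4) + slice_angle_3 a k s))
             has_real_derivative D3) (at t)" "D3 < 0"
      and "((\<lambda>s. third_side (a 5) (a 4) (slice_angle_5 a k s + tri_angle k (a 4) (a 3)))
             has_real_derivative D5) (at t)" "0 < D5"
    by blast
  moreover have "bd (\<gamma> s) 1 = third_side k (a 2) (slice_angle_3 a k s)"
    "bd (\<gamma> s) 3 = third_side (a 3) (a 2) (tri_angle (a 3) k (a 4) + slice_angle_3 a k s)"
    "bd (\<gamma> s) 5 = third_side (a 5) (a 4) (slice_angle_5 a k s + tri_angle k (a 4) (a 3))"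
    if "s \<in> S" for s
    using slice_diagonals[OF slice(1-4)[OF that]] by simp_all
  ultimately show ?thesis
    using transfer[of _ _ 1] transfer[of _ _ 3] transfer[of _ _ 5] by blast
qed

end
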